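(* For any $q\in\mathbb N$, $0<\epsilon\le1$ and $\lambda>\mu_q^*>0$, there exist a multilinear polynomial $f$ with nonnegative coefficients of total power $q$ and independent $\{0,1\}$-valued random variables $X_1,\dots,X_m$ such that (i) $\mu_j(f,X)\le\epsilon^{q-j}\mu_q^*$ for all $0\le j\le q$; (ii) $\Pr[f(X)-\mathbb E[f(X)]\ge\lambda]\ge\exp\{-2\epsilon\}\left(\frac{\epsilon}{4q(\lambda/\mu_q^* )^{1/q}}\right)^{4q(\lambda/\mu_q^* )^{1/q}}$; (iii) $\Pr[f(X)-\mathbb E[f(X)]\ge\mu_q^*]\ge\exp\{-2\epsilon\}\left(\frac{\epsilon}{q+1}\right)^{q+1}$.
   Context: For a multilinear polynomial $f(x)=\sum_{h\in\mathcal H}w_h\prod_{v\in h}x_v$ with $w_h\ge0$ and independent $\{0,1\}$-valued random variables $X$, $\mu_r(f,X)=\max_{A\subseteq[m],|A|=r}\sum_{h\in\mathcal H,\,A\subseteq h}w_h\prod_{i\in h\setminus A}\mathbb E[X_i]$. *)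

theory Defs
  imports "HOL-Probability.Probability"
begin

text \<open>A multilinear polynomial on variables indexed by 0..m-1 is given by a finite
  family H of hyperedges (subsets of the variable set) and weights w.
  Evaluation at a point x.\<close>
definition mpoly_eval :: "nat set set \<Rightarrow> (nat set \<Rightarrow> real) \<Rightarrow> (nat \<Rightarrow> real) \<Rightarrow> real" where
  "mpoly_eval H w x = (\<Sum>h\<in>H. w h * (\<Prod>v\<in>h. x v))"

text \<open>If no r-subset of [m] exists, the maximum over the
  empty family is taken to be 0 (all candidate values are nonnegative, so adding 0 to
  the maximised set changes nothing otherwise).\<close>
definition mu :: "nat \<Rightarrow> nat \<Rightarrow> nat set set \<Rightarrow> (nat set \<Rightarrow> real) \<Rightarrow> (nat \<Rightarrow> real) \<Rightarrow> real" where
  "mu r m H w EXi = Max (insert 0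
     ((\<lambda>A. \<Sum>h\<in>{h\<in>H. A \<subseteq> h}. w h * (\<Prod>i\<in>h - A. EXi i)) ` {A. A \<subseteq> {..<m} \<and> card A = r}))"

end

theory Submission
  imports Defs
begin

text \<open>Take all \<open>q\<close>-subsets of \<open>K \<approx> 4 q (\<lambda>/\<mu>\<^sub>q\<^sup>*)\<^bsup>1/q\<^esup>\<close> variables, each with weight \<open>\<mu>\<^sub>q\<^sup>*\<close>, and
  i.i.d. Bernoulli variables of mean \<open>p = \<epsilon>/K\<close>. Then \<open>\<mu>\<^sub>j \<le> (K p)\<^bsup>q-j\<^esup> \<mu>\<^sub>q\<^sup>*\<close> and
  \<open>E f \<le> \<mu>\<^sub>q\<^sup>*\<close>, while \<open>f = \<mu>\<^sub>q\<^sup>* \<cdot> (N choose q)\<close> for \<open>N\<close> the number of ones. The deviation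
  \<open>\<lambda>\<close> is reached when all \<open>K\<close> variables are one (probability \<open>p\<^sup>K\<close>), because \<open>K\<close> is
  chosen with \<open>(K choose q) \<ge> \<lambda>/\<mu>\<^sub>q\<^sup>* + 1\<close>; the deviation \<open>\<mu>\<^sub>q\<^sup>*\<close>
  when exactly \<open>q + 1\<close> are one, which has probability at least
  \<open>(K/(q+1))\<^bsup>q+1\<^esup> p\<^bsup>q+1\<^esup> (1 - p)\<^sup>K \<ge> (\<epsilon>/(q+1))\<^bsup>q+1\<^esup> e\<^bsup>-2\<epsilon>\<^esup>\<close>.\<close>

definition bernoulli_cube :: "nat \<Rightarrow> real \<Rightarrow> (nat \<Rightarrow> bool) pmf" where
  "bernoulli_cube K p = Pi_pmf {..<K} False (\<lambda>_. bernoulli_pmf p)"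

definition ones :: "nat \<Rightarrow> (nat \<Rightarrow> bool) \<Rightarrow> nat set" where
  "ones K \<omega> = {i. i < K \<and> \<omega> i}"

definition complete_hypergraph :: "nat \<Rightarrow> nat \<Rightarrow> nat set set" where
  "complete_hypergraph K q = {h. h \<subseteq> {..<K} \<and> card h = q}"

abbreviation complete_poly :: "nat \<Rightarrow> nat \<Rightarrow> real \<Rightarrow> (nat \<Rightarrow> bool) \<Rightarrow> real" where
  "complete_poly K q c \<omega> \<equiv> mpoly_eval (complete_hypergraph K q) (\<lambda>_. c) (\<lambda>i. of_bool (\<omega> i))"

lemma finite_complete_hypergraph: "finite (complete_hypergraph K q)"
  unfolding complete_hypergraph_def by (rule finite_subset[of _ "Pow {..<K}"]) auto

lemma card_complete_hypergraph: "card (complete_hypergraph K q) = K choose q"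
  unfolding complete_hypergraph_def using n_subsets[of "{..<K}" q] by simp

lemma prod_of_bool_eq: "finite h \<Longrightarrow> (\<Prod>v\<in>h. of_bool (\<omega> v) :: real) = of_bool (h \<subseteq> {v. \<omega> v})"
  by (induction h rule: finite_induct) auto

lemma complete_poly_eq: "complete_poly K q c \<omega> = c * real (card (ones K \<omega>) choose q)"
proof -
  let ?H = "complete_hypergraph K q"
  have "complete_poly K q c \<omega> = (\<Sum>h\<in>?H. c * of_bool (h \<subseteq> ones K \<omega>))"
    unfolding mpoly_eval_def
  proof (intro sum.cong refl)
    fix h assume "h \<in> ?H"
    then have "finite h" "h \<subseteq> {..<K}"
      by (auto simp: complete_hypergraph_def finite_subset)
    then show "c * (\<Prod>v\<in>h. of_bool (\<omega> v)) = c * of_bool (h \<subseteq> ones K \<omega>)"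
      by (auto simp: prod_of_bool_eq ones_def)
  qed
  also have "\<dots> = c * real (card {h\<in>?H. h \<subseteq> ones K \<omega>})"
    by (simp add: sum_distrib_left[symmetric] finite_complete_hypergraph Collect_conj_eq Int_commute)
  also have "{h\<in>?H. h \<subseteq> ones K \<omega>} = {h. h \<subseteq> ones K \<omega> \<and> card h = q}"
    by (auto simp: complete_hypergraph_def ones_def)
  also have "card \<dots> = card (ones K \<omega>) choose q"
    by (rule n_subsets) (simp add: ones_def)
  finally show ?thesis .
qed

lemma expectation_bernoulli_cube_prod:
  assumes "h \<subseteq> {..<K}" "0 \<le> p" "p \<le> 1"
  shows "measure_pmf.expectation (bernoulli_cube K p) (\<lambda>\<omega>. \<Prod>v\<in>h. of_bool (\<omega> v) :: real) = p ^ card h"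
proof -
  let ?f = "\<lambda>v b. if v \<in> h then of_bool b else 1 :: real"
  have "(\<Prod>v\<in>h. of_bool (\<omega> v) :: real) = (\<Prod>v<K. ?f v (\<omega> v))" for \<omega>
    using assms(1) by (simp add: prod.If_cases Int_absorb1)
  then have "measure_pmf.expectation (bernoulli_cube K p) (\<lambda>\<omega>. \<Prod>v\<in>h. of_bool (\<omega> v) :: real)
      = (\<Prod>v<K. measure_pmf.expectation (bernoulli_pmf p) (?f v))"
    unfolding bernoulli_cube_def
    by (simp only:) (rule expectation_prod_Pi_pmf, auto intro: integrable_measure_pmf_finite)
  also have "\<dots> = (\<Prod>v<K. if v \<in> h then p else 1)"
    using assms by (intro prod.cong) auto
  also have "\<dots> = p ^ card h"
    using assms(1) by (simp add: prod.If_cases Int_absorb1)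
  finally show ?thesis .
qed

lemma measure_bernoulli_cube_ones_eq:
  assumes "T \<subseteq> {..<K}" "0 \<le> p" "p \<le> 1"
  shows "measure_pmf.prob (bernoulli_cube K p) {\<omega>. ones K \<omega> = T} = p ^ card T * (1 - p) ^ (K - card T)"
proof -
  have "{\<omega>. ones K \<omega> = T} = Pi {..<K} (\<lambda>i. {i \<in> T})"
    using assms(1) by (auto simp: ones_def Pi_def)
  then have "measure_pmf.prob (bernoulli_cube K p) {\<omega>. ones K \<omega> = T}
      = (\<Prod>i<K. measure_pmf.prob (bernoulli_pmf p) {i \<in> T})"
    by (simp add: bernoulli_cube_def measure_Pi_pmf_Pi)
  also have "\<dots> = (\<Prod>i<K. if i \<in> T then p else 1 - p)"
    using assms by (intro prod.cong) (auto simp: measure_pmf_single)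
  also have "\<dots> = p ^ card T * (1 - p) ^ (K - card T)"
    using assms(1) by (simp add: prod.If_cases Int_absorb1 Diff_eq[symmetric] card_Diff_subset finite_subset)
  finally show ?thesis .
qed

lemma measure_bernoulli_cube_card_ones:
  assumes "0 \<le> p" "p \<le> 1"
  shows "measure_pmf.prob (bernoulli_cube K p) {\<omega>. card (ones K \<omega>) = j}
    = real (K choose j) * p ^ j * (1 - p) ^ (K - j)"
proof -
  let ?Ts = "{T. T \<subseteq> {..<K} \<and> card T = j}"
  have "measure_pmf.prob (bernoulli_cube K p) {\<omega>. card (ones K \<omega>) = j}
      = measure_pmf.prob (bernoulli_cube K p) (\<Union>T\<in>?Ts. {\<omega>. ones K \<omega> = T})"
    by (rule arg_cong[where f = "measure_pmf.prob _"]) (auto simp: ones_def)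
  also have "\<dots> = (\<Sum>T\<in>?Ts. measure_pmf.prob (bernoulli_cube K p) {\<omega>. ones K \<omega> = T})"
    by (rule measure_pmf.finite_measure_finite_Union)
       (auto simp: disjoint_family_on_def intro: finite_subset[of _ "Pow {..<K}"])
  also have "\<dots> = (\<Sum>T\<in>?Ts. p ^ j * (1 - p) ^ (K - j))"
    using assms by (intro sum.cong refl) (auto simp: measure_bernoulli_cube_ones_eq)
  also have "\<dots> = real (K choose j) * p ^ j * (1 - p) ^ (K - j)"
    using n_subsets[of "{..<K}" j] by simp
  finally show ?thesis .
qed

lemma exp_neg_two_le_one_minus: "0 \<le> (x::real) \<Longrightarrow> x \<le> 1/2 \<Longrightarrow> exp (-2 * x) \<le> 1 - x"
proof -
  assume x: "0 \<le> x" "x \<le> 1/2"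
  have "-2 * x \<le> - x - 2 * x\<^sup>2"
    using mult_left_mono[OF x(2) x(1)] by (simp add: power2_eq_square)
  also have "\<dots> \<le> ln (1 - x)"
    by (rule ln_one_minus_pos_lower_bound) (use x in auto)
  finally have "exp (-2 * x) \<le> exp (ln (1 - x))"
    by simp
  then show ?thesis
    using x by simp
qed

lemma measure_bernoulli_cube_card_ones_ge:
  assumes "j \<le> K" "0 \<le> p" "p \<le> 1/2"
  shows "exp (-2 * (real K * p)) * (real K * p / real j) ^ j
    \<le> measure_pmf.prob (bernoulli_cube K p) {\<omega>. card (ones K \<omega>) = j}"
proof -
  have "exp (-2 * (real K * p)) = exp (-2 * p) ^ K"
    by (simp add: exp_of_nat_mult[symmetric] algebra_simps)
  also have "\<dots> \<le> (1 - p) ^ K"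
    using assms by (intro power_mono exp_neg_two_le_one_minus) auto
  also have "\<dots> \<le> (1 - p) ^ (K - j)"
    using assms by (intro power_decreasing) auto
  finally have exp_le: "exp (-2 * (real K * p)) \<le> (1 - p) ^ (K - j)" .
  have "(real K * p / real j) ^ j = (real K / real j) ^ j * p ^ j"
    by (simp add: power_mult_distrib[symmetric])
  also have "\<dots> \<le> real (K choose j) * p ^ j"
    using assms by (intro mult_right_mono binomial_ge_n_over_k_pow_k) auto
  finally have "(real K * p / real j) ^ j \<le> real (K choose j) * p ^ j" .
  with exp_le have "exp (-2 * (real K * p)) * (real K * p / real j) ^ j
      \<le> (1 - p) ^ (K - j) * (real (K choose j) * p ^ j)"
    using assms by (intro mult_mono) auto
  then show ?thesis
    using assms by (simp add: measure_bernoulli_cube_card_ones algebra_simps)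
qed

lemma indep_vars_bernoulli_cube:
  "prob_space.indep_vars (measure_pmf (bernoulli_cube K p)) (\<lambda>_. borel) (\<lambda>i \<omega>. of_bool (\<omega> i) :: real) {..<K}"
  using prob_space.indep_vars_compose2[OF measure_pmf.prob_space_axioms
      indep_vars_Pi_pmf[of "{..<K}" False "\<lambda>_. bernoulli_pmf p"], of "\<lambda>_ b. of_bool b :: real" "\<lambda>_. borel"]
  by (simp add: bernoulli_cube_def)

lemma expectation_complete_poly:
  assumes "0 \<le> p" "p \<le> 1"
  shows "measure_pmf.expectation (bernoulli_cube K p) (complete_poly K q c) = c * real (K choose q) * p ^ q"
proof -
  let ?H = "complete_hypergraph K q"
  have "measure_pmf.expectation (bernoulli_cube K p) (complete_poly K q c)
      = (\<Sum>h\<in>?H. c * measure_pmf.expectation (bernoulli_cube K p) (\<lambda>\<omega>. \<Prod>v\<in>h. of_bool (\<omega> v)))"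
    unfolding mpoly_eval_def
    by (subst Bochner_Integration.integral_sum)
       (auto intro!: integrable_mult_right measure_pmf.integrable_const_bound[where B = 1] simp: abs_prod prod_le_1)
  also have "\<dots> = (\<Sum>h\<in>?H. c * p ^ q)"
    using assms by (intro sum.cong refl) (auto simp: complete_hypergraph_def expectation_bernoulli_cube_prod)
  also have "\<dots> = c * real (K choose q) * p ^ q"
    by (simp add: card_complete_hypergraph)
  finally show ?thesis .
qed

lemma card_complete_hypergraph_supersets_le:
  assumes "A \<subseteq> {..<K}" "q \<le> K"
  shows "card {h \<in> complete_hypergraph K q. A \<subseteq> h} \<le> K ^ (q - card A)"
proof -
  have "finite A"
    using assms(1) finite_subset by blast
  then have "card {h \<in> complete_hypergraph K q. A \<subseteq> h} \<le> card (complete_hypergraph K (q - card A))"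
    by (intro card_inj_on_le[where f = "\<lambda>h. h - A"] finite_complete_hypergraph)
       (auto simp: inj_on_def complete_hypergraph_def card_Diff_subset)
  also have "\<dots> \<le> K ^ (q - card A)"
    using assms(2) by (simp add: card_complete_hypergraph binomial_le_pow)
  finally show ?thesis .
qed

lemma mu_complete_hypergraph_le:
  assumes "j \<le> q" "q \<le> K" "0 \<le> p" "0 \<le> c" "real K * p \<le> e"
    and EXi: "\<And>i. i < K \<Longrightarrow> EXi i = p"
  shows "mu j K (complete_hypergraph K q) (\<lambda>_. c) EXi \<le> e ^ (q - j) * c"
proof -
  have bound: "(\<Sum>h\<in>{h \<in> complete_hypergraph K q. A \<subseteq> h}. c * (\<Prod>i\<in>h - A. EXi i)) \<le> e ^ (q - j) * c"
    if A: "A \<subseteq> {..<K}" "card A = j" for A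
  proof -
    let ?S = "{h \<in> complete_hypergraph K q. A \<subseteq> h}"
    have "(\<Sum>h\<in>?S. c * (\<Prod>i\<in>h - A. EXi i)) = (\<Sum>h\<in>?S. c * p ^ (q - j))"
    proof (intro sum.cong refl)
      fix h assume h: "h \<in> ?S"
      then have "(\<Prod>i\<in>h - A. EXi i) = (\<Prod>i\<in>h - A. p)"
        using EXi by (intro prod.cong) (auto simp: complete_hypergraph_def)
      moreover have "card (h - A) = q - j"
        using h A by (auto simp: complete_hypergraph_def card_Diff_subset finite_subset)
      ultimately show "c * (\<Prod>i\<in>h - A. EXi i) = c * p ^ (q - j)"
        by simp
    qed
    also have "\<dots> = real (card ?S) * c * p ^ (q - j)"
      by simp
    also have "\<dots> \<le> real K ^ (q - j) * c * p ^ (q - j)"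
      using card_complete_hypergraph_supersets_le[OF A(1) assms(2)] A(2) assms
      by (intro mult_right_mono) (auto simp flip: of_nat_power)
    also have "\<dots> \<le> e ^ (q - j) * c"
      using assms by (simp add: mult.commute mult.left_commute mult_left_mono power_mono
          flip: power_mult_distrib)
    finally show ?thesis .
  qed
  have "0 \<le> e"
    using assms(3,5) by (metis mult_nonneg_nonneg of_nat_0_le_iff order_trans)
  then show ?thesis
    unfolding mu_def using bound assms(4)
    by (intro Max.boundedI) (auto simp: finite_subset[of _ "Pow {..<K}"])
qed

lemma tail_complete_poly_ge:
  assumes "q \<le> K" "0 \<le> p" "p \<le> 1" "real K * p \<le> 1" "0 \<le> c" "t + c \<le> c * real (j choose q)"
  shows "measure_pmf.prob (bernoulli_cube K p) {\<omega>. card (ones K \<omega>) = j}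
    \<le> measure_pmf.prob (bernoulli_cube K p)
        {\<omega>. t \<le> complete_poly K q c \<omega> - measure_pmf.expectation (bernoulli_cube K p) (complete_poly K q c)}"
proof (rule measure_pmf.finite_measure_mono)
  have "real (K choose q) * p ^ q \<le> (real K * p) ^ q"
    using assms by (simp add: power_mult_distrib mult_right_mono binomial_le_pow flip: of_nat_power)
  also have "\<dots> \<le> 1"
    using assms by (simp add: power_le_one)
  finally have "measure_pmf.expectation (bernoulli_cube K p) (complete_poly K q c) \<le> c"
    using assms mult_left_mono[of _ 1 c] by (simp add: expectation_complete_poly mult.assoc)
  then show "{\<omega>. card (ones K \<omega>) = j}
    \<subseteq> {\<omega>. t \<le> complete_poly K q c \<omega> - measure_pmf.expectation (bernoulli_cube K p) (complete_poly K q c)}"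
    using assms(6) by (auto simp: complete_poly_eq)
qed simp

lemma tail_complete_poly_all_ones:
  assumes "q \<le> K" "0 \<le> p" "p \<le> 1" "real K * p \<le> 1" "0 \<le> c" "t + c \<le> c * real (K choose q)"
  shows "p ^ K \<le> measure_pmf.prob (bernoulli_cube K p)
    {\<omega>. t \<le> complete_poly K q c \<omega> - measure_pmf.expectation (bernoulli_cube K p) (complete_poly K q c)}"
  using tail_complete_poly_ge[OF assms] assms(2,3) by (simp add: measure_bernoulli_cube_card_ones)

lemma tail_complete_poly_q_plus_one:
  assumes "q + 1 \<le> K" "1 \<le> q" "0 \<le> p" "p \<le> 1/2" "real K * p \<le> 1" "0 \<le> c"
  shows "exp (-2 * (real K * p)) * (real K * p / real (q + 1)) ^ (q + 1) \<le> measure_pmf.prob (bernoulli_cube K p)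
    {\<omega>. c \<le> complete_poly K q c \<omega> - measure_pmf.expectation (bernoulli_cube K p) (complete_poly K q c)}"
proof -
  have "c + c \<le> c * real (q + 1 choose q)"
    using assms mult_left_mono[of 2 "real q + 1" c] by (simp add: algebra_simps)
  then show ?thesis
    using assms by (intro order_trans[OF measure_bernoulli_cube_card_ones_ge[of "q + 1" K p]
        tail_complete_poly_ge[of q K p c c "q + 1"]]) auto
qed

lemma power_plus_one_ge:
  fixes r :: real
  assumes "0 \<le> r" "1 \<le> n"
  shows "r ^ n + 1 \<le> (r + 1) ^ n"
  using assms(2)
proof (induction n rule: dec_induct)
  case (step n)
  have "r ^ Suc n + 1 \<le> (r ^ n + 1) * (r + 1)"
    using assms(1) by (simp add: algebra_simps)
  also have "\<dots> \<le> (r + 1) ^ n * (r + 1)"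
    using step.IH assms(1) by (intro mult_right_mono) auto
  finally show ?case
    by (simp add: mult.commute)
qed simp

lemma exists_size_binomial_ge:
  fixes r :: real
  assumes "1 < r" "1 \<le> q"
  shows "\<exists>K. 2 * q \<le> K \<and> real K \<le> 4 * real q * r \<and> r ^ q + 1 \<le> real (K choose q)"
proof (intro exI conjI)
  define s where "s = nat \<lceil>r\<rceil> + 1"
  have s: "r + 1 \<le> real s" "real s \<le> 4 * r" "2 \<le> s"
    using assms(1) by (auto simp: s_def) linarith+
  then show "2 * q \<le> q * s"
    by simp
  show "real (q * s) \<le> 4 * real q * r"
    using mult_left_mono[OF s(2), of "real q"] by simp
  have "r ^ q + 1 \<le> (r + 1) ^ q"
    using assms by (intro power_plus_one_ge) auto
  also have "\<dots> \<le> (real (q * s) / real q) ^ q"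
    using s assms by (auto intro: power_mono)
  also have "\<dots> \<le> real (q * s choose q)"
    using s by (intro binomial_ge_n_over_k_pow_k) auto
  finally show "r ^ q + 1 \<le> real (q * s choose q)" .
qed

lemma powr_div_le_power_div:
  fixes \<epsilon> T :: real
  assumes "0 < \<epsilon>" "\<epsilon> \<le> 1" "0 < K" "real K \<le> T"
  shows "(\<epsilon> / T) powr T \<le> (\<epsilon> / real K) ^ K"
proof -
  have base: "0 < \<epsilon> / T" "\<epsilon> / T \<le> 1"
    using assms by auto
  have "(\<epsilon> / T) powr T \<le> (\<epsilon> / T) powr real K"
    using base assms(4) by (intro powr_mono') auto
  also have "\<dots> = (\<epsilon> / T) ^ K"
    using base by (simp add: powr_realpow)
  also have "\<dots> \<le> (\<epsilon> / real K) ^ K"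
    using assms base by (intro power_mono divide_left_mono) auto
  finally show ?thesis .
qed

theorem lemma18:
  fixes q :: nat and \<epsilon> lam mustar :: real
  assumes "q \<ge> 1" and "0 < \<epsilon>" and "\<epsilon> \<le> 1" and "0 < mustar" and "mustar < lam"
  shows "\<exists>(m::nat) (H::nat set set) (w::nat set \<Rightarrow> real)
            (M::(nat \<Rightarrow> bool) measure) (X::nat \<Rightarrow> (nat \<Rightarrow> bool) \<Rightarrow> real).
    finite H \<and> (\<forall>h\<in>H. h \<subseteq> {..<m}) \<and> (\<forall>h\<in>H. 0 \<le> w h) \<and>
    (\<forall>h\<in>H. card h \<le> q) \<and> (\<exists>h\<in>H. card h = q \<and> 0 < w h) \<and>
    prob_space M \<and> prob_space.indep_vars M (\<lambda>_. borel) X {..<m} \<and>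
    (\<forall>i<m. \<forall>\<omega>\<in>space M. X i \<omega> \<in> {0, 1}) \<and>
    (let EXi = (\<lambda>i. integral\<^sup>L M (X i));
         fX = (\<lambda>\<omega>. mpoly_eval H w (\<lambda>i. X i \<omega>));
         EfX = integral\<^sup>L M fX;
         r = (lam / mustar) powr (1 / real q)
     in (\<forall>j\<le>q. mu j m H w EXi \<le> \<epsilon> ^ (q - j) * mustar) \<and>
        measure M {\<omega>\<in>space M. fX \<omega> - EfX \<ge> lam}
          \<ge> exp (- 2 * \<epsilon>) * (\<epsilon> / (4 * real q * r)) powr (4 * real q * r) \<and>
        measure M {\<omega>\<in>space M. fX \<omega> - EfX \<ge> mustar}
          \<ge> exp (- 2 * \<epsilon>) * (\<epsilon> / real (q + 1)) ^ (q + 1))"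
proof -
  define r where "r = (lam / mustar) powr (1 / real q)"
  have r: "1 < r" "mustar * r ^ q = lam"
    using assms by (auto simp: r_def powr_powr field_simps simp flip: powr_realpow)
  obtain K where K: "2 * q \<le> K" "real K \<le> 4 * real q * r" "r ^ q + 1 \<le> real (K choose q)"
    using exists_size_binomial_ge[OF r(1) assms(1)] by blast
  define p where "p = \<epsilon> / real K"
  have p: "0 < p" "p \<le> 1/2" "real K * p = \<epsilon>"
    using K assms by (auto simp: p_def field_simps)
  let ?P = "bernoulli_cube K p"
  have "exp (- 2 * \<epsilon>) * (\<epsilon> / (4 * real q * r)) powr (4 * real q * r)
      \<le> (\<epsilon> / (4 * real q * r)) powr (4 * real q * r)"
    using assms by (intro mult_left_le_one_le) auto
  also have "\<dots> \<le> p ^ K"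
    unfolding p_def using K assms by (intro powr_div_le_power_div) auto
  also have "\<dots> \<le> measure_pmf.prob ?P
      {\<omega>. lam \<le> complete_poly K q mustar \<omega> - measure_pmf.expectation ?P (complete_poly K q mustar)}"
    using mult_left_mono[OF K(3), of mustar] r K p assms
    by (intro tail_complete_poly_all_ones) (auto simp: algebra_simps)
  finally have ii: "exp (- 2 * \<epsilon>) * (\<epsilon> / (4 * real q * r)) powr (4 * real q * r) \<le> \<dots>" .
  have iii: "exp (- 2 * \<epsilon>) * (\<epsilon> / real (q + 1)) ^ (q + 1) \<le> measure_pmf.prob ?P
      {\<omega>. mustar \<le> complete_poly K q mustar \<omega> - measure_pmf.expectation ?P (complete_poly K q mustar)}"
    using tail_complete_poly_q_plus_one[of q K p mustar] K p assms by simp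
  have EX: "measure_pmf.expectation ?P (\<lambda>\<omega>. of_bool (\<omega> i)) = p" if "i < K" for i
    using expectation_bernoulli_cube_prod[of "{i}" K p] that p by simp
  have mu: "mu j K (complete_hypergraph K q) (\<lambda>_. mustar)
      (\<lambda>i. measure_pmf.expectation ?P (\<lambda>\<omega>. of_bool (\<omega> i))) \<le> \<epsilon> ^ (q - j) * mustar" if "j \<le> q" for j
    using that K p assms EX by (intro mu_complete_hypergraph_le) auto
  have H: "\<forall>h\<in>complete_hypergraph K q. h \<subseteq> {..<K} \<and> card h \<le> q" "{..<q} \<in> complete_hypergraph K q"
    using K by (auto simp: complete_hypergraph_def)
  show ?thesis
    unfolding Let_def r_def[symmetric]
    by (intro exI[of _ K] exI[of _ "complete_hypergraph K q"] exI[of _ "\<lambda>_. mustar"]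
        exI[of _ "measure_pmf ?P"] exI[of _ "\<lambda>i \<omega>. of_bool (\<omega> i)"] conjI)
       (use ii iii mu H assms(4) in \<open>simp_all add: finite_complete_hypergraph
         indep_vars_bernoulli_cube measure_pmf.prob_space_axioms bexI[OF _ H(2)]\<close>)
qed

end
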